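(* Let $G$ be a compact matrix Lie group of $n\times n$ unitary matrices with normalized Haar measure $\eta$, let $\epsilon>0$, and let $X=\{x_1,\dots,x_N\}\subset\mathbb{C}^n$ satisfy $x_i\neq x_j$ for $i\neq j$ and $Ax_i\neq x_i$ for all $i$ and all $A\in G$ with $A\neq I$. Let $t$ be a positive integer and let $S^t_{ij}$ be as in the context. Suppose $x_j=Q\cdot x_i$ for some $Q\in G$. Then for all $k,r\in[N]$ and $R\in G$, $$\int_G S^t_{ik}(I,C)\,S^t_{ir}(I,CR)\,d\eta(C)=\int_G S^t_{jk}(I,C)\,S^t_{jr}(I,CR)\,d\eta(C),$$ i.e. $S^t_{i,\cdot}(I,\cdot)\circledast S^t_{i,\cdot}(I,\cdot)=S^t_{j,\cdot}(I,\cdot)\circledast S^t_{j,\cdot}(I,\cdot)$ as functions on $[N]^2\times G$.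
   Context: $[N]=\{1,\dots,N\}$. $W_{ij}(A,B)=e^{-\|Ax_i-Bx_j\|^2/\epsilon}$; $D_{ii}=\sum_{j=1}^N\int_G W_{ij}(I,C)\,d\eta(C)$; $S_{ij}(A,B)=W_{ij}(A,B)/\sqrt{D_{ii}D_{jj}}$. $S^1_{ij}=S_{ij}$ and $S^t_{ij}(A,B)=\sum_{k=1}^N\int_G S^{t-1}_{ik}(A,C)S_{kj}(C,B)\,d\eta(C)$ for $t\ge2$ (the kernel of the $t$-th power of the integral operator $S\{f\}(i,A)=\sum_j\int_G S_{ij}(A,B)f_j(B)\,d\eta(B)$ on $L^2([N]\times G)$). For functions $f,g$ on $[N]\times G$ (written $f(k,C)=f_k(C)$), $(f\circledast g)(k,r,R)=\int_G f_k(C)\,g_r(CR)\,d\eta(C)$; $S^t_{i,\cdot}(I,\cdot)$ denotes $(k,C)\mapsto S^t_{ik}(I,C)$. *)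

theory Defs
  imports "HOL-Analysis.Analysis" "HOL-Probability.Probability"
begin

type_synonym 'n cmat = "complex^'n^'n"

definition conj_transpose :: "'n cmat \<Rightarrow> 'n::finite cmat" where
  "conj_transpose A = (\<chi> i j. cnj (A $ j $ i))"

definition unitary_mat :: "'n::finite cmat \<Rightarrow> bool" where
  "unitary_mat A \<longleftrightarrow> A ** conj_transpose A = mat 1"

text \<open>Compact matrix Lie group of unitary matrices: a compact (hence closed) subgroup of U(n).
  Closed subgroups of U(n) are Lie groups (Cartan).\<close>
definition compact_unitary_group :: "'n::finite cmat set \<Rightarrow> bool" where
  "compact_unitary_group G \<longleftrightarrow> compact G \<and> mat 1 \<in> G \<and> (\<forall>A\<in>G. unitary_mat A)
     \<and> (\<forall>A\<in>G. \<forall>B\<in>G. A ** B \<in> G) \<and> (\<forall>A\<in>G. \<exists>B\<in>G. A ** B = mat 1)"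

definition normalized_haar :: "'n::finite cmat set \<Rightarrow> 'n cmat measure \<Rightarrow> bool" where
  "normalized_haar G \<eta> \<longleftrightarrow> prob_space \<eta> \<and>
     sets \<eta> = sets (restrict_space borel G) \<and> space \<eta> = G \<and>
     (\<forall>g\<in>G. distr \<eta> \<eta> (\<lambda>C. g ** C) = \<eta> \<and> distr \<eta> \<eta> (\<lambda>C. C ** g) = \<eta>)"

definition W :: "(nat \<Rightarrow> complex^'n) \<Rightarrow> real \<Rightarrow> nat \<Rightarrow> nat \<Rightarrow> 'n::finite cmat \<Rightarrow> 'n cmat \<Rightarrow> real" where
  "W x \<epsilon> i j A B = exp (- (norm (A *v x i - B *v x j))\<^sup>2 / \<epsilon>)"

definition Dg :: "'n::finite cmat measure \<Rightarrow> nat \<Rightarrow> (nat \<Rightarrow> complex^'n) \<Rightarrow> real \<Rightarrow> nat \<Rightarrow> real" where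
  "Dg \<eta> N x \<epsilon> i = (\<Sum>j\<in>{1..N}. \<integral>C. W x \<epsilon> i j (mat 1) C \<partial>\<eta>)"

definition Sk :: "'n::finite cmat measure \<Rightarrow> nat \<Rightarrow> (nat \<Rightarrow> complex^'n) \<Rightarrow> real \<Rightarrow> nat \<Rightarrow> nat \<Rightarrow> 'n cmat \<Rightarrow> 'n cmat \<Rightarrow> real" where
  "Sk \<eta> N x \<epsilon> i j A B = W x \<epsilon> i j A B / sqrt (Dg \<eta> N x \<epsilon> i * Dg \<eta> N x \<epsilon> j)"

text \<open>S^t for t \<ge> 1 (index t = 0 is set equal to S and never used).\<close>
fun Spow :: "'n::finite cmat measure \<Rightarrow> nat \<Rightarrow> (nat \<Rightarrow> complex^'n) \<Rightarrow> real \<Rightarrow> nat \<Rightarrow> nat \<Rightarrow> nat \<Rightarrow> 'n cmat \<Rightarrow> 'n cmat \<Rightarrow> real" where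
  "Spow \<eta> N x \<epsilon> 0 i j A B = Sk \<eta> N x \<epsilon> i j A B"
| "Spow \<eta> N x \<epsilon> (Suc 0) i j A B = Sk \<eta> N x \<epsilon> i j A B"
| "Spow \<eta> N x \<epsilon> (Suc (Suc t)) i j A B =
     (\<Sum>k\<in>{1..N}. \<integral>C. Spow \<eta> N x \<epsilon> (Suc t) i k A C * Sk \<eta> N x \<epsilon> k j C B \<partial>\<eta>)"

definition gconv :: "'n::finite cmat measure \<Rightarrow> (nat \<Rightarrow> 'n cmat \<Rightarrow> real) \<Rightarrow> (nat \<Rightarrow> 'n cmat \<Rightarrow> real)
    \<Rightarrow> nat \<Rightarrow> nat \<Rightarrow> 'n cmat \<Rightarrow> real" where
  "gconv \<eta> f g k r R = (\<integral>C. f k C * g r (C ** R) \<partial>\<eta>)"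

end

theory Submission
  imports Defs
begin

(* The kernels W, S and S^t are invariant under simultaneous left translation of both group
   arguments by an element of G, because G acts by isometries and the Haar measure is
   left invariant. If x_j = Q x_i, then W_jk(A,B) = W_ik(AQ,B), and hence, by left invariance,
   D_jj = D_ii and S^t_jk(I,C) = S^t_ik(Q,C) = S^t_ik(I,Q^-1 C). The substitution C := Q^-1 C
   in the Haar integral defining the convolution then turns the j-th row into the i-th. *)

lemma norm_square_vec_complex:
  "complex_of_real ((norm (v::complex^'n::finite))\<^sup>2) = (\<Sum>l\<in>UNIV. v$l * cnj (v$l))"
proof -
  have "(norm v)\<^sup>2 = (\<Sum>l\<in>UNIV. (cmod (v$l))\<^sup>2)"
    unfolding norm_vec_def L2_set_def by (simp add: sum_nonneg)
  then show ?thesis by (simp only: of_real_sum complex_norm_square)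
qed

lemma unitary_mat_left_inverse:
  "unitary_mat U \<Longrightarrow> conj_transpose U ** U = mat 1"
  unfolding unitary_mat_def using matrix_left_right_inverse by blast

lemma norm_unitary_mult:
  fixes U :: "'n::finite cmat"
  assumes "unitary_mat U"
  shows "norm (U *v y) = norm y"
proof -
  have orth: "(\<Sum>l\<in>UNIV. cnj (U$l$m) * U$l$p) = (if m = p then 1 else 0)" for m p
  proof -
    have "(conj_transpose U ** U) $ m $ p = (if m = p then 1 else 0)"
      using unitary_mat_left_inverse[OF assms] by (simp add: mat_def)
    then show ?thesis by (simp add: matrix_matrix_mult_def conj_transpose_def)
  qed
  have "(\<Sum>l\<in>UNIV. (U *v y)$l * cnj ((U *v y)$l))
     = (\<Sum>l\<in>UNIV. \<Sum>p\<in>UNIV. \<Sum>m\<in>UNIV. (y$p * cnj (y$m)) * (cnj (U$l$m) * U$l$p))"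
    apply (simp add: matrix_vector_mult_def sum_distrib_left sum_distrib_right)
    apply (rule sum.cong[OF refl], subst sum.swap, simp add: algebra_simps)
    done
  also have "\<dots> = (\<Sum>p\<in>UNIV. \<Sum>m\<in>UNIV. (y$p * cnj (y$m)) * (\<Sum>l\<in>UNIV. cnj (U$l$m) * U$l$p))"
    by (simp add: sum_distrib_left, subst sum.swap, rule sum.cong, simp, subst sum.swap, simp)
  also have "\<dots> = (\<Sum>p\<in>UNIV. y$p * cnj (y$p))"
    by (simp add: orth if_distrib cong: if_cong)
  finally have "complex_of_real ((norm (U *v y))\<^sup>2) = complex_of_real ((norm y)\<^sup>2)"
    by (simp only: norm_square_vec_complex)
  then have "(norm (U *v y))\<^sup>2 = (norm y)\<^sup>2" using of_real_eq_iff by blast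
  then show ?thesis by (simp add: power2_eq_iff_nonneg)
qed

lemma measurable_left_mult_haar:
  assumes "compact_unitary_group G" "normalized_haar G \<eta>" "U \<in> G"
  shows "(\<lambda>C. U ** C) \<in> measurable \<eta> \<eta>"
proof -
  have sets: "sets \<eta> = sets (restrict_space borel G)"
    using assms(2) unfolding normalized_haar_def by blast
  have "continuous_on UNIV (\<lambda>C::'a cmat. U ** C)"
    unfolding matrix_matrix_mult_def by (intro continuous_intros)
  then have "(\<lambda>C. U ** C) \<in> measurable (restrict_space borel G) (restrict_space borel G)"
    using assms(1,3) unfolding compact_unitary_group_def
    by (intro measurable_restrict_space3) (auto intro: borel_measurable_continuous_onI)
  then show ?thesis using measurable_cong_sets[OF sets sets] by blast
qed

(* No integrability assumption: f is measurable iff f (U ** _) is, since U has an inverse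
   in G, and both integrals are 0 otherwise. *)
lemma integral_left_mult_haar:
  fixes f :: "'a::finite cmat \<Rightarrow> real"
  assumes G: "compact_unitary_group G" and \<eta>: "normalized_haar G \<eta>" and U: "U \<in> G"
  shows "(\<integral>C. f (U ** C) \<partial>\<eta>) = (\<integral>C. f C \<partial>\<eta>)"
proof (cases "f \<in> borel_measurable \<eta>")
  case True
  have "distr \<eta> \<eta> (\<lambda>C. U ** C) = \<eta>" using \<eta> U unfolding normalized_haar_def by blast
  then show ?thesis
    using integral_distr[OF measurable_left_mult_haar[OF G \<eta> U] True] by simp
next
  case False
  obtain V where V: "V \<in> G" "U ** V = mat 1" using G U unfolding compact_unitary_group_def by blast
  have "(\<lambda>C. f (U ** C)) \<notin> borel_measurable \<eta>"
  proof
    assume "(\<lambda>C. f (U ** C)) \<in> borel_measurable \<eta>"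
    then have "(\<lambda>C. f (U ** (V ** C))) \<in> borel_measurable \<eta>"
      using measurable_compose[OF measurable_left_mult_haar[OF G \<eta> V(1)]] by blast
    with False show False by (simp add: matrix_mul_assoc V(2))
  qed
  with False show ?thesis using not_integrable_integral_eq borel_measurable_integrable by metis
qed

lemma gconv_left_mult_haar:
  assumes "compact_unitary_group G" "normalized_haar G \<eta>" "V \<in> G"
  shows "gconv \<eta> (\<lambda>k C. f k (V ** C)) (\<lambda>r C. g r (V ** C)) k r R = gconv \<eta> f g k r R"
  unfolding gconv_def
  using integral_left_mult_haar[OF assms, of "\<lambda>C. f k C * g r (C ** R)"]
  by (simp add: matrix_mul_assoc)

lemma left_invariant_kernel_right_factor:
  assumes "\<And>A B. K (Q ** A) (Q ** B) = K A B" "Q ** V = mat 1"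
  shows "K Q C = K (mat 1) (V ** C)"
proof -
  have "K Q C = K (Q ** mat 1) (Q ** (V ** C))" by (simp add: matrix_mul_assoc assms(2))
  then show ?thesis by (simp only: assms(1))
qed

lemma W_left_mult:
  assumes "unitary_mat U"
  shows "W x \<epsilon> a b (U ** A) (U ** B) = W x \<epsilon> a b A B"
proof -
  have "(U ** A) *v x a - (U ** B) *v x b = U *v (A *v x a - B *v x b)"
    by (simp add: matrix_vector_mul_assoc[symmetric] matrix_vector_mult_diff_distrib)
  then show ?thesis unfolding W_def by (simp add: norm_unitary_mult[OF assms])
qed

lemma W_orbit_point:
  "x j = Q *v x i \<Longrightarrow> W x \<epsilon> j k A B = W x \<epsilon> i k (A ** Q) B"
  unfolding W_def by (simp add: matrix_vector_mul_assoc[symmetric])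

context
  fixes G :: "'n::finite cmat set" and \<eta> :: "'n cmat measure"
    and N :: nat and x :: "nat \<Rightarrow> complex^'n" and \<epsilon> :: real
  assumes G: "compact_unitary_group G" and \<eta>: "normalized_haar G \<eta>"
begin

lemma Sk_left_mult:
  "U \<in> G \<Longrightarrow> Sk \<eta> N x \<epsilon> a b (U ** A) (U ** B) = Sk \<eta> N x \<epsilon> a b A B"
  using G unfolding Sk_def compact_unitary_group_def by (simp add: W_left_mult)

lemma Spow_left_mult:
  assumes U: "U \<in> G"
  shows "Spow \<eta> N x \<epsilon> t a b (U ** A) (U ** B) = Spow \<eta> N x \<epsilon> t a b A B"
proof (induction t arbitrary: b B)
  case (Suc t)
  show ?case
  proof (cases t)
    case (Suc s)
    have "(\<integral>C. Spow \<eta> N x \<epsilon> t a l (U ** A) C * Sk \<eta> N x \<epsilon> l b C (U ** B) \<partial>\<eta>)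
        = (\<integral>C. Spow \<eta> N x \<epsilon> t a l A C * Sk \<eta> N x \<epsilon> l b C B \<partial>\<eta>)" for l
      using integral_left_mult_haar[OF G \<eta> U,
          of "\<lambda>C. Spow \<eta> N x \<epsilon> t a l (U ** A) C * Sk \<eta> N x \<epsilon> l b C (U ** B)"]
      by (simp add: Suc.IH Sk_left_mult[OF U])
    then show ?thesis using Suc by simp
  qed (simp add: Sk_left_mult[OF U])
qed (simp add: Sk_left_mult[OF U])

context
  fixes i j :: nat and Q :: "'n cmat"
  assumes Q: "Q \<in> G" and orbit: "x j = Q *v x i"
begin

lemma Dg_orbit_point: "Dg \<eta> N x \<epsilon> j = Dg \<eta> N x \<epsilon> i"
proof -
  obtain V where V: "V \<in> G" "Q ** V = mat 1" using G Q unfolding compact_unitary_group_def by blast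
  have unitary: "unitary_mat Q" using G Q unfolding compact_unitary_group_def by blast
  have "W x \<epsilon> j k (mat 1) C = W x \<epsilon> i k (mat 1) (V ** C)" for k C
    using left_invariant_kernel_right_factor[where K = "W x \<epsilon> i k", OF W_left_mult[OF unitary] V(2)]
    by (simp add: W_orbit_point[OF orbit])
  then have "(\<integral>C. W x \<epsilon> j k (mat 1) C \<partial>\<eta>) = (\<integral>C. W x \<epsilon> i k (mat 1) C \<partial>\<eta>)" for k
    using integral_left_mult_haar[OF G \<eta> V(1), of "W x \<epsilon> i k (mat 1)"] by simp
  then show ?thesis unfolding Dg_def by simp
qed

lemma Spow_orbit_point:
  "Spow \<eta> N x \<epsilon> t j k A B = Spow \<eta> N x \<epsilon> t i k (A ** Q) B"
proof -
  have Sk: "Sk \<eta> N x \<epsilon> j k A B = Sk \<eta> N x \<epsilon> i k (A ** Q) B" for k A B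
    unfolding Sk_def by (simp add: Dg_orbit_point W_orbit_point[OF orbit])
  show ?thesis
  proof (induction t arbitrary: k B)
    case (Suc t)
    then show ?case by (cases t) (simp_all add: Sk)
  qed (simp add: Sk)
qed

end

end

theorem proposition3:
  fixes G :: "(complex^'n::finite^'n) set" and \<eta> :: "(complex^'n^'n) measure"
    and N :: nat and x :: "nat \<Rightarrow> complex^'n" and \<epsilon> :: real and t i j :: nat and Q :: "complex^'n^'n"
  assumes "compact_unitary_group G"
    and "normalized_haar G \<eta>"
    and "\<epsilon> > 0"
    and "\<forall>a\<in>{1..N}. \<forall>b\<in>{1..N}. a \<noteq> b \<longrightarrow> x a \<noteq> x b"
    and "\<forall>a\<in>{1..N}. \<forall>A\<in>G. A \<noteq> mat 1 \<longrightarrow> A *v x a \<noteq> x a"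
    and "t \<ge> 1"
    and "i \<in> {1..N}" and "j \<in> {1..N}"
    and "Q \<in> G" and "x j = Q *v x i"
  shows "\<forall>k\<in>{1..N}. \<forall>r\<in>{1..N}. \<forall>R\<in>G.
     gconv \<eta> (\<lambda>k C. Spow \<eta> N x \<epsilon> t i k (mat 1) C) (\<lambda>r C. Spow \<eta> N x \<epsilon> t i r (mat 1) C) k r R
   = gconv \<eta> (\<lambda>k C. Spow \<eta> N x \<epsilon> t j k (mat 1) C) (\<lambda>r C. Spow \<eta> N x \<epsilon> t j r (mat 1) C) k r R"
proof (intro ballI)
  fix k r R
  note G = assms(1) and \<eta> = assms(2) and Q = assms(9) and orbit = assms(10)
  obtain V where V: "V \<in> G" "Q ** V = mat 1" using G Q unfolding compact_unitary_group_def by blast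
  let ?S = "Spow \<eta> N x \<epsilon> t"
  have row_j: "?S j a (mat 1) C = ?S i a (mat 1) (V ** C)" for a C
    using left_invariant_kernel_right_factor[where K = "?S i a", OF Spow_left_mult[OF G \<eta> Q] V(2)]
    by (simp add: Spow_orbit_point[OF G \<eta> Q orbit])
  show "gconv \<eta> (\<lambda>k C. ?S i k (mat 1) C) (\<lambda>r C. ?S i r (mat 1) C) k r R
      = gconv \<eta> (\<lambda>k C. ?S j k (mat 1) C) (\<lambda>r C. ?S j r (mat 1) C) k r R"
    using gconv_left_mult_haar[OF G \<eta> V(1), of "\<lambda>k C. ?S i k (mat 1) C" "\<lambda>r C. ?S i r (mat 1) C"]
    by (simp add: row_j)
qed

end
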